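(* The flux recovery operator $R_\delta\ddot q(x)=\int_{\Omega_\delta}(x-x')\ddot q(x,x')\omega_\delta(x-x')\,dx'$ is a bounded linear operator from $L^{1,2}(\Omega_\delta\times\Omega_\delta)$ to $L^1(\Omega_\delta;\mathbb{R}^n)$, with operator norm $\|R_\delta\|\le1$.
   Context: $\Omega\subset\mathbb{R}^n$ ($n\ge2$) is a bounded open set, $\delta>0$, $\Omega_\delta=\bigcup_{x\in\Omega}B(x,\delta)$. $K_{2,n}=|\mathbb{S}^{n-1}|^{-1}\int_{\mathbb{S}^{n-1}}|s\cdot e|^2ds$ for a unit vector $e$. $\omega_\delta:\mathbb{R}^n\to[0,\infty)$ is radial, measurable, supported in $B(0,\delta)$, with $\int_{\mathbb{R}^n}|z|^2\omega_\delta^2(z)dz=K_{2,n}^{-1}$. $L^{1,2}(\Omega_\delta\times\Omega_\delta)$ is the mixed-norm space with norm $\int_{\Omega_\delta}(\int_{\Omega_\delta}|\ddot q(x,x')|^2dx')^{1/2}dx$; $L^1(\Omega_\delta;\mathbb{R}^n)$ is normed by $\int|\cdot|$ with $|\cdot|$ Euclidean. *)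

theory Defs
  imports "HOL-Analysis.Analysis"
begin

definition nbhd :: "'a::euclidean_space set \<Rightarrow> real \<Rightarrow> 'a set" where
  "nbhd \<Omega> d = (\<Union>x\<in>\<Omega>. ball x d)"

text \<open>Average of a function over the unit sphere S^(n-1) with respect to normalised
  surface measure, expressed (via polar coordinates) through the 0-homogeneous
  extension to the unit ball: avg_S f = (integral over B(0,1) of f(x/|x|)) / |B(0,1)|.\<close>
definition sphere_avg :: "('a::euclidean_space \<Rightarrow> real) \<Rightarrow> real" where
  "sphere_avg f = (\<integral>x\<in>ball 0 1. f (x /\<^sub>R norm x) \<partial>lebesgue) / measure lebesgue (ball (0::'a) 1)"

definition K2 :: "'a::euclidean_space \<Rightarrow> real" where
  "K2 e = sphere_avg (\<lambda>s. \<bar>s \<bullet> e\<bar> ^ 2)"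

definition inner_L2 :: "'a::euclidean_space set \<Rightarrow> ('a \<times> 'a \<Rightarrow> real) \<Rightarrow> 'a \<Rightarrow> ennreal" where
  "inner_L2 D q x =
     (let I = (\<integral>\<^sup>+x'. ennreal ((q (x, x'))\<^sup>2) * indicator D x' \<partial>lebesgue)
      in if I = \<infinity> then \<infinity> else ennreal (sqrt (enn2real I)))"

definition mixed_norm :: "'a::euclidean_space set \<Rightarrow> ('a \<times> 'a \<Rightarrow> real) \<Rightarrow> ennreal" where
  "mixed_norm D q = (\<integral>\<^sup>+x. inner_L2 D q x * indicator D x \<partial>lebesgue)"

definition L12 :: "'a::euclidean_space set \<Rightarrow> ('a \<times> 'a \<Rightarrow> real) set" where
  "L12 D = {q. q \<in> borel_measurable borel \<and> mixed_norm D q < \<infinity>}"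

definition flux_recovery :: "'a::euclidean_space set \<Rightarrow> ('a \<Rightarrow> real) \<Rightarrow> ('a \<times> 'a \<Rightarrow> real) \<Rightarrow> 'a \<Rightarrow> 'a" where
  "flux_recovery D \<omega> q x = (\<integral>x'\<in>D. (q (x, x') * \<omega> (x - x')) *\<^sub>R (x - x') \<partial>lebesgue)"

end

theory Submission
  imports Defs
begin

text \<open>For fixed x, R q(x) is the integral of f(y) h(y) with f = 1_D q(x,-) and
  h(y) = \<omega>(x - y) (x - y). Pairing with the unit vector u in the direction of R q(x) and
  applying Cauchy-Schwarz gives |R q(x)|^2 <= ||q(x,-)||^2_{L^2(D)} * int \<omega>(z)^2 (z.u)^2 dz.
  The second-moment matrix of a radial weight is a multiple of the identity, so the last
  integral is (1/n) int |z|^2 \<omega>(z)^2 dz = 1/(n K_{2,n}) = 1, since K_{2,n} = 1/n.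
  Integrating |R q(x)| <= ||q(x,-)||_{L^2(D)} over D gives ||R q||_{L^1} <= ||q||_{L^{1,2}};
  for almost every x the inner norm is finite, so the integrals defining R q(x) exist and
  linearity is that of the integral.\<close>

section \<open>Invariance of Lebesgue measure\<close>

lemma borel_measurable_lebesgue_inner[measurable]:
  "(\<lambda>z::'a::euclidean_space. z \<bullet> v) \<in> borel_measurable lebesgue"
  by (rule measurable_completion) simp

lemma borel_measurable_lebesgue_norm[measurable]:
  "(\<lambda>z::'a::euclidean_space. norm z) \<in> borel_measurable lebesgue"
  by (rule measurable_completion) simp

lemma lebesgue_distr_eq_of_lborel:
  fixes S :: "'a::euclidean_space \<Rightarrow> 'a"
  assumes S_borel: "S \<in> borel \<rightarrow>\<^sub>M borel" and S_lborel: "distr lborel borel S = lborel"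
  shows "S \<in> lebesgue \<rightarrow>\<^sub>M lebesgue" and "distr lebesgue lebesgue S = lebesgue"
proof -
  have S_lborel': "S \<in> lborel \<rightarrow>\<^sub>M lborel" using S_borel by simp
  have S_lebesgue: "S \<in> lebesgue \<rightarrow>\<^sub>M lborel" using S_lborel' by (rule measurable_completion)
  have "distr lebesgue lborel S = distr lborel lborel S" by (rule distr_completion[OF S_lborel'])
  also have "\<dots> = distr lborel borel S" by (rule distr_cong) auto
  finally have distr_eq: "distr lebesgue lborel S = lborel" using S_lborel by simp
  show "S \<in> lebesgue \<rightarrow>\<^sub>M lebesgue"
    using completion.measurable_completion2[OF S_lebesgue] distr_eq by simp
  have "completion (distr lebesgue lborel S) = distr lebesgue (completion lborel) S"
    by (rule completion.completion_distr_eq[OF S_lebesgue]) (simp add: distr_eq)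
  then show "distr lebesgue lebesgue S = lebesgue" by (simp add: distr_eq)
qed

lemma integral_lebesgue_invariant:
  fixes S :: "'a::euclidean_space \<Rightarrow> 'a" and g :: "'a \<Rightarrow> real"
  assumes "S \<in> borel \<rightarrow>\<^sub>M borel" and "distr lborel borel S = lborel"
    and "g \<in> borel_measurable lebesgue"
  shows "(\<integral>z. g (S z) \<partial>lebesgue) = (\<integral>z. g z \<partial>lebesgue)"
  using integral_distr[OF lebesgue_distr_eq_of_lborel(1)[OF assms(1,2)] assms(3)]
  by (simp add: lebesgue_distr_eq_of_lborel(2)[OF assms(1,2)])

lemma nn_integral_lebesgue_invariant:
  fixes S :: "'a::euclidean_space \<Rightarrow> 'a" and g :: "'a \<Rightarrow> ennreal"
  assumes "S \<in> borel \<rightarrow>\<^sub>M borel" and "distr lborel borel S = lborel"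
    and "g \<in> borel_measurable lebesgue"
  shows "(\<integral>\<^sup>+z. g (S z) \<partial>lebesgue) = (\<integral>\<^sup>+z. g z \<partial>lebesgue)"
  using nn_integral_distr[OF lebesgue_distr_eq_of_lborel(1)[OF assms(1,2)], of g]
  by (simp add: lebesgue_distr_eq_of_lborel(2)[OF assms(1,2)] assms(3))

lemma AE_lebesgue_invariant:
  fixes S :: "'a::euclidean_space \<Rightarrow> 'a"
  assumes "S \<in> borel \<rightarrow>\<^sub>M borel" and "distr lborel borel S = lborel"
    and "AE z in lebesgue. P z"
  shows "AE z in lebesgue. P (S z)"
proof -
  have "AE z in distr lebesgue lebesgue S. P z"
    using assms(3) by (simp only: lebesgue_distr_eq_of_lborel(2)[OF assms(1,2)])
  then show ?thesis by (rule AE_distrD[OF lebesgue_distr_eq_of_lborel(1)[OF assms(1,2)]])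
qed

lemma lborel_distr_reflect_Basis:
  fixes b :: "'a::euclidean_space"
  assumes b: "b \<in> Basis"
  shows "distr lborel borel (\<lambda>z. z - (2 * (z \<bullet> b)) *\<^sub>R b) = (lborel :: 'a measure)"
proof -
  define c where "c j = (if j = b then -1 else 1 :: real)" for j :: 'a
  have "0 + (\<Sum>j\<in>Basis. (c j * (z \<bullet> j)) *\<^sub>R j) = z - (2 * (z \<bullet> b)) *\<^sub>R b" for z :: 'a
    by (rule euclidean_eqI)
       (auto simp: c_def inner_sum_left inner_Basis if_distrib inner_diff_left b sum.If_cases cong: if_cong)
  moreover have "(\<Prod>j\<in>Basis. \<bar>c j\<bar>) = 1" by (rule prod.neutral) (simp add: c_def)
  ultimately show ?thesis
    using lborel_affine_euclidean[of c 0] by (simp add: c_def density_1)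
qed

lemma ball_permutes_inv:
  assumes "p permutes S"
  shows "(\<forall>i\<in>S. P i (p i)) \<longleftrightarrow> (\<forall>j\<in>S. P (inv p j) j)"
proof -
  have "(\<forall>j\<in>S. P (inv p j) j) \<longleftrightarrow> (\<forall>j\<in>p ` S. P (inv p j) j)"
    using permutes_image[OF assms] by simp
  also have "\<dots> \<longleftrightarrow> (\<forall>i\<in>S. P i (p i))"
    using permutes_inverses(2)[OF assms] by simp
  finally show ?thesis ..
qed

lemma lborel_distr_permute_Basis:
  fixes p :: "'a::euclidean_space \<Rightarrow> 'a"
  assumes p: "p permutes Basis"
  shows "distr lborel borel (\<lambda>z. \<Sum>i\<in>Basis. (z \<bullet> p i) *\<^sub>R i) = (lborel :: 'a measure)"
proof (rule lborel_eqI[symmetric])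
  define P where "P r z = (\<Sum>i\<in>Basis. (z \<bullet> r i) *\<^sub>R i)" for r :: "'a \<Rightarrow> 'a" and z :: 'a
  have P_inner: "P r z \<bullet> i = z \<bullet> r i" if "i \<in> Basis" for r z i
    using that by (simp add: P_def inner_sum_left inner_Basis if_distrib cong: if_cong)
  have P_borel[measurable]: "P r \<in> borel \<rightarrow>\<^sub>M borel" for r
    unfolding P_def[abs_def] by measurable
  have inv_p_Basis: "inv p i \<in> Basis \<longleftrightarrow> i \<in> Basis" for i
    using permutes_in_image[OF permutes_inv[OF p]] .
  fix l u :: 'a
  assume le: "\<And>b. b \<in> Basis \<Longrightarrow> l \<bullet> b \<le> u \<bullet> b"
  have preimage: "P p -` box l u = box (P (inv p) l) (P (inv p) u)"
  proof (rule set_eqI)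
    fix z
    show "z \<in> P p -` box l u \<longleftrightarrow> z \<in> box (P (inv p) l) (P (inv p) u)"
      using ball_permutes_inv[OF p, of "\<lambda>i j. l \<bullet> i < z \<bullet> j \<and> z \<bullet> j < u \<bullet> i"]
      by (simp add: mem_box P_inner)
  qed
  have prod_inv: "(\<Prod>i\<in>Basis. (u - l) \<bullet> inv p i) = (\<Prod>i\<in>Basis. (u - l) \<bullet> i)"
    using prod.permute[OF permutes_inv[OF p], of "\<lambda>i. (u - l) \<bullet> i"] unfolding comp_def by (rule sym)
  have box_le: "\<forall>i\<in>Basis. P (inv p) l \<bullet> i \<le> P (inv p) u \<bullet> i"
    using le inv_p_Basis by (simp add: P_inner)
  have "emeasure (distr lborel borel (P p)) (box l u) = emeasure lborel (P p -` box l u)"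
    by (subst emeasure_distr) auto
  also have "\<dots> = (\<Prod>i\<in>Basis. (u - l) \<bullet> inv p i)"
    unfolding preimage emeasure_lborel_box_eq using box_le
    by (auto simp: P_inner inner_diff_left intro!: prod.cong)
  also have "\<dots> = (\<Prod>i\<in>Basis. (u - l) \<bullet> i)"
    by (simp only: prod_inv)
  finally show "emeasure (distr lborel borel (\<lambda>z. \<Sum>i\<in>Basis. (z \<bullet> p i) *\<^sub>R i)) (box l u)
      = (\<Prod>i\<in>Basis. (u - l) \<bullet> i)" by (simp only: P_def[abs_def])
qed simp

lemma lborel_distr_diff:
  fixes x :: "'a::euclidean_space"
  shows "distr lborel borel (\<lambda>y. x - y) = (lborel :: 'a measure)"
  using lborel_affine[of "-1" x] by (simp add: density_1)

lemma measurable_lebesgue_diff_compose: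
  fixes x :: "'a::euclidean_space"
  assumes "g \<in> lebesgue \<rightarrow>\<^sub>M N"
  shows "(\<lambda>y. g (x - y)) \<in> lebesgue \<rightarrow>\<^sub>M N"
  using measurable_compose[OF lebesgue_distr_eq_of_lborel(1)[OF _ lborel_distr_diff] assms] by simp

lemma borel_measurable_lebesgue_diff[measurable]:
  "(\<lambda>y::'a::euclidean_space. x - y) \<in> borel_measurable lebesgue"
  by (rule measurable_completion) simp

lemma borel_measurable_lebesgue_slice:
  fixes q :: "'a::euclidean_space \<times> 'a \<Rightarrow> real"
  assumes "q \<in> borel_measurable borel"
  shows "(\<lambda>y. q (x, y)) \<in> borel_measurable lebesgue"
  using assms by (intro measurable_completion) simp

section \<open>Second moments of radial functions\<close>

text \<open>Isotropy comes from coordinate reflections, which kill the mixed moments, and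
  coordinate permutations, which equalise the diagonal ones; unlike general rotations, these
  maps are seen to preserve Lebesgue measure by computing the measure of boxes.\<close>

lemma integral_radial_mixed_moment_Basis:
  fixes F :: "'a::euclidean_space \<Rightarrow> real"
  assumes F_meas[measurable]: "F \<in> borel_measurable lebesgue"
    and F_radial: "\<And>z z'. norm z = norm z' \<Longrightarrow> F z = F z'"
    and b: "b \<in> Basis" "b' \<in> Basis" "b \<noteq> b'"
  shows "(\<integral>z. F z * ((z \<bullet> b) * (z \<bullet> b')) \<partial>lebesgue) = 0"
proof -
  define S where "S z = z - (2 * (z \<bullet> b)) *\<^sub>R b" for z :: 'a
  have S_borel: "S \<in> borel \<rightarrow>\<^sub>M borel" unfolding S_def[abs_def] by measurable
  have S_lborel: "distr lborel borel S = lborel"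
    unfolding S_def[abs_def] by (rule lborel_distr_reflect_Basis[OF b(1)])
  have "b \<bullet> b' = 0" using b by (simp add: inner_not_same_Basis)
  then have S_b: "S z \<bullet> b = - (z \<bullet> b)" and S_b': "S z \<bullet> b' = z \<bullet> b'" for z
    using b by (simp_all add: S_def inner_diff_left)
  have "S z \<bullet> S z = z \<bullet> z" for z
    using b(1) by (simp add: S_def inner_diff_left inner_diff_right inner_commute[of b z] power2_eq_square)
  then have S_norm: "norm (S z) = norm z" for z by (simp add: norm_eq_sqrt_inner)
  have "(\<integral>z. F z * ((z \<bullet> b) * (z \<bullet> b')) \<partial>lebesgue) = (\<integral>z. F (S z) * ((S z \<bullet> b) * (S z \<bullet> b')) \<partial>lebesgue)"
    by (rule integral_lebesgue_invariant[OF S_borel S_lborel, symmetric]) measurable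
  also have "\<dots> = - (\<integral>z. F z * ((z \<bullet> b) * (z \<bullet> b')) \<partial>lebesgue)"
    using F_radial[OF S_norm] by (simp add: S_b S_b')
  finally show ?thesis by simp
qed

lemma integral_radial_coord_square_Basis:
  fixes F :: "'a::euclidean_space \<Rightarrow> real"
  assumes F_meas[measurable]: "F \<in> borel_measurable lebesgue"
    and F_radial: "\<And>z z'. norm z = norm z' \<Longrightarrow> F z = F z'"
    and b: "b \<in> Basis" "b' \<in> Basis"
  shows "(\<integral>z. F z * (z \<bullet> b)\<^sup>2 \<partial>lebesgue) = (\<integral>z. F z * (z \<bullet> b')\<^sup>2 \<partial>lebesgue)"
proof -
  define p where "p = Transposition.transpose b b'"
  have p: "p permutes Basis" unfolding p_def using b by (rule permutes_swap_id)
  define S where "S z = (\<Sum>i\<in>Basis. (z \<bullet> p i) *\<^sub>R i)" for z :: 'a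
  have S_borel: "S \<in> borel \<rightarrow>\<^sub>M borel" unfolding S_def[abs_def] by measurable
  have S_lborel: "distr lborel borel S = lborel"
    unfolding S_def[abs_def] by (rule lborel_distr_permute_Basis[OF p])
  have S_inner: "S z \<bullet> i = z \<bullet> p i" if "i \<in> Basis" for z i
    using that by (simp add: S_def inner_sum_left inner_Basis if_distrib cong: if_cong)
  have S_norm: "norm (S z) = norm z" for z
  proof -
    have "S z \<bullet> S z = (\<Sum>i\<in>Basis. (z \<bullet> p i) * (z \<bullet> p i))"
      by (subst euclidean_inner) (simp add: S_inner)
    also have "\<dots> = (\<Sum>i\<in>Basis. (z \<bullet> i) * (z \<bullet> i))"
      using sum.permute[OF p, of "\<lambda>i. (z \<bullet> i) * (z \<bullet> i)"] by (simp add: comp_def)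
    also have "\<dots> = z \<bullet> z" by (subst (2) euclidean_inner) simp
    finally show ?thesis by (simp add: norm_eq_sqrt_inner)
  qed
  have "(\<integral>z. F z * (z \<bullet> b)\<^sup>2 \<partial>lebesgue) = (\<integral>z. F (S z) * (S z \<bullet> b)\<^sup>2 \<partial>lebesgue)"
    by (rule integral_lebesgue_invariant[OF S_borel S_lborel, symmetric]) measurable
  also have "\<dots> = (\<integral>z. F z * (z \<bullet> b')\<^sup>2 \<partial>lebesgue)"
    using F_radial[OF S_norm] b(1) by (simp add: S_inner p_def)
  finally show ?thesis .
qed

lemma integrable_mult_inner_inner:
  fixes F :: "'a::euclidean_space \<Rightarrow> real"
  assumes [measurable]: "F \<in> borel_measurable lebesgue"
    and F_int: "integrable lebesgue (\<lambda>z. F z * (norm z)\<^sup>2)"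
  shows "integrable lebesgue (\<lambda>z. F z * ((z \<bullet> v) * (z \<bullet> w)))"
proof (rule Bochner_Integration.integrable_bound[OF integrable_mult_right[OF F_int, of "norm v * norm w"]])
  show "AE z in lebesgue. norm (F z * ((z \<bullet> v) * (z \<bullet> w))) \<le> norm (norm v * norm w * (F z * (norm z)\<^sup>2))"
  proof (rule AE_I2)
    fix z :: 'a
    have "\<bar>z \<bullet> v\<bar> * \<bar>z \<bullet> w\<bar> \<le> (norm z * norm v) * (norm z * norm w)"
      by (intro mult_mono Cauchy_Schwarz_ineq2) auto
    then have "\<bar>F z\<bar> * (\<bar>z \<bullet> v\<bar> * \<bar>z \<bullet> w\<bar>) \<le> \<bar>F z\<bar> * ((norm z * norm v) * (norm z * norm w))"
      by (rule mult_left_mono) simp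
    then show "norm (F z * ((z \<bullet> v) * (z \<bullet> w))) \<le> norm (norm v * norm w * (F z * (norm z)\<^sup>2))"
      by (simp add: abs_mult power2_eq_square mult_ac)
  qed
qed measurable

lemma integral_radial_moment:
  fixes F :: "'a::euclidean_space \<Rightarrow> real"
  assumes F_meas[measurable]: "F \<in> borel_measurable lebesgue"
    and F_radial: "\<And>z z'. norm z = norm z' \<Longrightarrow> F z = F z'"
    and F_int: "integrable lebesgue (\<lambda>z. F z * (norm z)\<^sup>2)"
  shows "(\<integral>z. F z * (z \<bullet> u)\<^sup>2 \<partial>lebesgue) = (u \<bullet> u) * (\<integral>z. F z * (norm z)\<^sup>2 \<partial>lebesgue) / DIM('a)"
proof -
  obtain b0 :: 'a where b0: "b0 \<in> Basis" using nonempty_Basis by blast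
  define m where "m = (\<integral>z. F z * (z \<bullet> b0)\<^sup>2 \<partial>lebesgue)"
  define c where "c b b' = (\<integral>z. F z * ((z \<bullet> b) * (z \<bullet> b')) \<partial>lebesgue)" for b b' :: 'a
  have c_int: "integrable lebesgue (\<lambda>z. F z * ((z \<bullet> b) * (z \<bullet> b')))" for b b' :: 'a
    by (rule integrable_mult_inner_inner[OF F_meas F_int])
  have c_diag: "c b b = m" if "b \<in> Basis" for b
    using integral_radial_coord_square_Basis[OF F_meas F_radial that b0]
    by (simp add: c_def m_def power2_eq_square)
  have c_off: "c b b' = 0" if "b \<in> Basis" "b' \<in> Basis" "b \<noteq> b'" for b b'
    unfolding c_def by (rule integral_radial_mixed_moment_Basis[OF F_meas F_radial that])
  have "(\<integral>z. F z * (norm z)\<^sup>2 \<partial>lebesgue) = (\<integral>z. (\<Sum>b\<in>Basis. F z * ((z \<bullet> b) * (z \<bullet> b))) \<partial>lebesgue)"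
    by (intro Bochner_Integration.integral_cong refl)
       (simp only: power2_norm_eq_inner euclidean_inner[of z z for z] sum_distrib_left)
  also have "\<dots> = (\<Sum>b\<in>Basis. c b b)"
    unfolding c_def by (rule Bochner_Integration.integral_sum) (rule c_int)
  also have "\<dots> = (\<Sum>b\<in>(Basis::'a set). m)"
    by (rule sum.cong[OF refl c_diag])
  also have "\<dots> = DIM('a) * m"
    by simp
  finally have total: "(\<integral>z. F z * (norm z)\<^sup>2 \<partial>lebesgue) = DIM('a) * m" .
  have "(\<integral>z. F z * (z \<bullet> u)\<^sup>2 \<partial>lebesgue)
      = (\<integral>z. (\<Sum>b\<in>Basis. \<Sum>b'\<in>Basis. ((u \<bullet> b) * (u \<bullet> b')) * (F z * ((z \<bullet> b) * (z \<bullet> b')))) \<partial>lebesgue)"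
    by (simp add: power2_eq_square euclidean_inner[of z u for z] sum_product sum_distrib_left mult_ac)
  also have "\<dots> = (\<Sum>b\<in>Basis. \<Sum>b'\<in>Basis. ((u \<bullet> b) * (u \<bullet> b')) * c b b')"
    unfolding c_def
    by (subst Bochner_Integration.integral_sum; simp add: c_int Bochner_Integration.integrable_sum
        Bochner_Integration.integral_sum)
  also have "\<dots> = (\<Sum>b\<in>Basis. (u \<bullet> b) * (u \<bullet> b) * m)"
  proof (rule sum.cong[OF refl])
    fix b :: 'a assume b: "b \<in> Basis"
    have "(\<Sum>b'\<in>Basis. ((u \<bullet> b) * (u \<bullet> b')) * c b b') = (\<Sum>b'\<in>Basis. if b' = b then (u \<bullet> b) * (u \<bullet> b) * m else 0)"
      using b c_diag c_off by (intro sum.cong) auto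
    then show "(\<Sum>b'\<in>Basis. ((u \<bullet> b) * (u \<bullet> b')) * c b b') = (u \<bullet> b) * (u \<bullet> b) * m"
      using b by simp
  qed
  also have "\<dots> = (u \<bullet> u) * m"
    by (simp add: euclidean_inner[of u u] sum_distrib_right)
  finally show ?thesis using total by simp
qed

lemma K2_eq:
  fixes e :: "'a::euclidean_space"
  assumes e: "norm e = 1"
  shows "K2 e = 1 / DIM('a)"
proof -
  define F where "F z = indicator (ball (0::'a) 1) z / (norm z)\<^sup>2" for z :: 'a
  define M where "M = measure lebesgue (ball (0::'a) 1)"
  have [measurable]: "ball (0::'a) 1 \<in> sets borel" by simp
  have F_meas: "F \<in> borel_measurable lebesgue"
    unfolding F_def[abs_def] by (rule measurable_completion) measurable
  have F_radial: "F z = F z'" if "norm z = norm z'" for z z'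
    using that by (simp add: F_def indicator_def)
  have F_norm: "F z * (norm z)\<^sup>2 = indicator (ball 0 1 - {0}) z" for z
    by (cases "z = 0") (auto simp: F_def indicator_def)
  have punctured_ball: "ball (0::'a) 1 - {0} \<in> fmeasurable lebesgue"
    by (rule fmeasurable_Diff) auto
  have F_int: "integrable lebesgue (\<lambda>z. F z * (norm z)\<^sup>2)"
    unfolding F_norm using punctured_ball by (auto simp: fmeasurable_def)
  have "measure lebesgue (ball (0::'a) 1 - {0}) = M"
    unfolding M_def by (rule measure_Diff_null_set) (auto simp: negligible_iff_null_sets[symmetric])
  then have "(\<integral>z. F z * (norm z)\<^sup>2 \<partial>lebesgue) = M"
    unfolding F_norm by simp
  then have "(\<integral>z. F z * (z \<bullet> e)\<^sup>2 \<partial>lebesgue) = M / DIM('a)"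
    using integral_radial_moment[OF F_meas F_radial F_int, of e] e by (simp add: norm_eq_1)
  moreover have "(\<integral>x\<in>ball 0 1. \<bar>(x /\<^sub>R norm x) \<bullet> e\<bar> ^ 2 \<partial>lebesgue) = (\<integral>z. F z * (z \<bullet> e)\<^sup>2 \<partial>lebesgue)"
    unfolding set_lebesgue_integral_def
    by (intro Bochner_Integration.integral_cong refl)
       (simp add: F_def indicator_def power2_eq_square divide_inverse mult_ac)
  moreover have "M > 0"
    unfolding M_def using content_ball_pos[of 1 "0::'a"] by simp
  ultimately show ?thesis
    unfolding K2_def sphere_avg_def by (simp add: M_def)
qed

section \<open>Square-integrable products\<close>

lemma integrable_scaleR_of_square_integrable:
  fixes f :: "'x \<Rightarrow> real" and h :: "'x \<Rightarrow> 'b::{banach, second_countable_topology}"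
  assumes [measurable]: "f \<in> borel_measurable M" "h \<in> borel_measurable M"
    and f_L2: "(\<integral>\<^sup>+x. ennreal ((f x)\<^sup>2) \<partial>M) < \<infinity>"
    and h_L2: "(\<integral>\<^sup>+x. ennreal ((norm (h x))\<^sup>2) \<partial>M) < \<infinity>"
  shows "integrable M (\<lambda>x. f x *\<^sub>R h x)"
proof (rule integrableI_bounded)
  have "(\<integral>\<^sup>+x. ennreal \<bar>f x\<bar> * ennreal (norm (h x)) \<partial>M)\<^sup>2
      \<le> (\<integral>\<^sup>+x. ennreal \<bar>f x\<bar> ^ 2 \<partial>M) * (\<integral>\<^sup>+x. ennreal (norm (h x)) ^ 2 \<partial>M)"
    by (rule Cauchy_Schwarz_nn_integral) auto
  also have "\<dots> < \<infinity>"
    using f_L2 h_L2 by (simp add: ennreal_power ennreal_mult_less_top)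
  finally show "(\<integral>\<^sup>+x. ennreal (norm (f x *\<^sub>R h x)) \<partial>M) < \<infinity>"
    by (simp add: ennreal_mult' power_less_top_ennreal)
qed measurable

lemma norm_integral_scaleR_square_le:
  fixes f :: "'x \<Rightarrow> real" and h :: "'x \<Rightarrow> 'b::euclidean_space" and C :: ennreal
  assumes [measurable]: "f \<in> borel_measurable M" "h \<in> borel_measurable M"
    and fh_int: "integrable M (\<lambda>x. f x *\<^sub>R h x)"
    and h_moment: "\<And>u. norm u = 1 \<Longrightarrow> (\<integral>\<^sup>+x. ennreal ((h x \<bullet> u)\<^sup>2) \<partial>M) \<le> C"
  shows "(ennreal (norm (\<integral>x. f x *\<^sub>R h x \<partial>M)))\<^sup>2 \<le> (\<integral>\<^sup>+x. ennreal ((f x)\<^sup>2) \<partial>M) * C"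
proof (cases "(\<integral>x. f x *\<^sub>R h x \<partial>M) = 0")
  case False
  define v where "v = (\<integral>x. f x *\<^sub>R h x \<partial>M)"
  define u where "u = v /\<^sub>R norm v"
  have u: "norm u = 1" using False by (simp add: u_def v_def)
  have "norm v = v \<bullet> u"
    using False by (simp add: u_def v_def power2_norm_eq_inner[symmetric] power2_eq_square)
  also have "\<dots> = (\<integral>x. (f x *\<^sub>R h x) \<bullet> u \<partial>M)"
    unfolding v_def by (rule integral_inner_left[symmetric]) (rule fh_int)
  also have "\<dots> = (\<integral>x. f x * (h x \<bullet> u) \<partial>M)"
    by simp
  finally have "ennreal (norm v) = ennreal (norm (\<integral>x. f x * (h x \<bullet> u) \<partial>M))"
    using norm_ge_zero[of v] by simp
  also have "\<dots> \<le> (\<integral>\<^sup>+x. ennreal \<bar>f x\<bar> * ennreal \<bar>h x \<bullet> u\<bar> \<partial>M)"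
    using integral_norm_bound_ennreal[OF integrable_inner_left[OF fh_int, of u]]
    by (simp add: abs_mult ennreal_mult)
  finally have "(ennreal (norm v))\<^sup>2 \<le> (\<integral>\<^sup>+x. ennreal \<bar>f x\<bar> * ennreal \<bar>h x \<bullet> u\<bar> \<partial>M)\<^sup>2"
    by (rule power_mono) simp
  also have "\<dots> \<le> (\<integral>\<^sup>+x. ennreal \<bar>f x\<bar> ^ 2 \<partial>M) * (\<integral>\<^sup>+x. ennreal \<bar>h x \<bullet> u\<bar> ^ 2 \<partial>M)"
    by (rule Cauchy_Schwarz_nn_integral) auto
  also have "\<dots> = (\<integral>\<^sup>+x. ennreal ((f x)\<^sup>2) \<partial>M) * (\<integral>\<^sup>+x. ennreal ((h x \<bullet> u)\<^sup>2) \<partial>M)"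
    by (simp add: ennreal_power)
  also have "\<dots> \<le> (\<integral>\<^sup>+x. ennreal ((f x)\<^sup>2) \<partial>M) * C"
    by (rule mult_left_mono[OF h_moment[OF u]]) simp
  finally show ?thesis by (simp add: v_def)
qed simp

lemma nn_integral_indicator_mult_square:
  "(\<integral>\<^sup>+y. ennreal ((indicator D y * f y)\<^sup>2) \<partial>M) = (\<integral>\<^sup>+y. ennreal ((f y)\<^sup>2) * indicator D y \<partial>M)"
  by (intro nn_integral_cong) (simp split: split_indicator)

section \<open>The flux recovery operator\<close>

text \<open>\<omega> is only Lebesgue measurable, so it is replaced by a Borel version \<omega>'; for each x the
  integrands agree almost everywhere because y \<mapsto> x - y preserves Lebesgue measure.\<close>

lemma borel_measurable_flux_recovery:
  fixes \<omega> :: "'a::euclidean_space \<Rightarrow> real" and q :: "'a \<times> 'a \<Rightarrow> real"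
  assumes \<omega>_meas: "\<omega> \<in> borel_measurable lebesgue"
    and [measurable]: "D \<in> sets borel" "q \<in> borel_measurable borel"
  shows "flux_recovery D \<omega> q \<in> borel_measurable lebesgue"
proof -
  obtain \<omega>' where \<omega>'_meas: "\<omega>' \<in> borel_measurable lborel" and \<omega>_ae_lborel: "AE z in lborel. \<omega> z = \<omega>' z"
    using completion_ex_borel_measurable_real[OF \<omega>_meas] by blast
  have \<omega>_ae: "AE z in lebesgue. \<omega> z = \<omega>' z" using \<omega>_ae_lborel by (rule AE_completion)
  have [measurable]: "\<omega>' \<in> borel_measurable borel" using \<omega>'_meas by simp
  have [measurable]: "q \<in> borel_measurable (lborel \<Otimes>\<^sub>M lborel)" by (simp add: lborel_prod)
  define G where "G x x' = indicator D x' *\<^sub>R ((q (x, x') * \<omega>' (x - x')) *\<^sub>R (x - x'))" for x x'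
  have G_meas: "case_prod G \<in> borel_measurable (lborel \<Otimes>\<^sub>M lborel)"
    unfolding G_def by measurable
  have flux_eq: "flux_recovery D \<omega> q x = (\<integral>x'. G x x' \<partial>lborel)" for x
  proof -
    have [measurable]: "(\<lambda>x'. \<omega> (x - x')) \<in> borel_measurable lebesgue"
      by (rule measurable_lebesgue_diff_compose[OF \<omega>_meas])
    have [measurable]: "(\<lambda>x'. q (x, x')) \<in> borel_measurable lebesgue"
      by (rule borel_measurable_lebesgue_slice) simp
    have [measurable]: "D \<in> sets lebesgue" by simp
    have G_lborel: "G x \<in> borel_measurable lborel" unfolding G_def by measurable
    have "AE x' in lebesgue. \<omega> (x - x') = \<omega>' (x - x')"
      using AE_lebesgue_invariant[OF _ lborel_distr_diff \<omega>_ae] by simp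
    then have "flux_recovery D \<omega> q x = (\<integral>x'. G x x' \<partial>lebesgue)"
      unfolding flux_recovery_def set_lebesgue_integral_def
      by (intro integral_cong_AE) (auto simp: G_def intro: measurable_completion[OF G_lborel])
    also have "\<dots> = (\<integral>x'. G x x' \<partial>lborel)"
      by (rule integral_completion[OF G_lborel])
    finally show ?thesis .
  qed
  have "(\<lambda>x. \<integral>x'. G x x' \<partial>lborel) \<in> borel_measurable lborel"
    by (rule lborel.borel_measurable_lebesgue_integral[OF G_meas])
  then show ?thesis
    unfolding flux_eq[abs_def] by (rule measurable_completion)
qed

lemma borel_measurable_inner_L2:
  fixes q :: "'a::euclidean_space \<times> 'a \<Rightarrow> real"
  assumes [measurable]: "D \<in> sets borel" "q \<in> borel_measurable borel"
  shows "inner_L2 D q \<in> borel_measurable lebesgue"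
proof -
  have [measurable]: "q \<in> borel_measurable (lborel \<Otimes>\<^sub>M lborel)" by (simp add: lborel_prod)
  have "(\<lambda>x. \<integral>\<^sup>+x'. ennreal ((q (x, x'))\<^sup>2) * indicator D x' \<partial>lborel) \<in> borel_measurable lborel"
    by (rule lborel.borel_measurable_nn_integral) measurable
  then have [measurable]: "(\<lambda>x. \<integral>\<^sup>+x'. ennreal ((q (x, x'))\<^sup>2) * indicator D x' \<partial>lebesgue) \<in> borel_measurable lebesgue"
    unfolding nn_integral_completion by (rule measurable_completion)
  show ?thesis
    unfolding inner_L2_def[abs_def] Let_def by measurable
qed

lemma AE_inner_L2_finite:
  fixes q :: "'a::euclidean_space \<times> 'a \<Rightarrow> real"
  assumes D: "D \<in> sets borel" and q: "q \<in> L12 D"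
  shows "AE x in lebesgue. x \<in> D \<longrightarrow> (\<integral>\<^sup>+x'. ennreal ((q (x, x'))\<^sup>2) * indicator D x' \<partial>lebesgue) < \<infinity>"
proof -
  have q_meas: "q \<in> borel_measurable borel" and finite: "mixed_norm D q < \<infinity>"
    using q by (auto simp: L12_def)
  have [measurable]: "inner_L2 D q \<in> borel_measurable lebesgue" "D \<in> sets lebesgue"
    using borel_measurable_inner_L2[OF D q_meas] D by auto
  have "AE x in lebesgue. inner_L2 D q x * indicator D x \<noteq> \<infinity>"
    by (rule nn_integral_PInf_AE) (use finite in \<open>auto simp: mixed_norm_def\<close>)
  then show ?thesis
    by eventually_elim (auto simp: inner_L2_def Let_def top.not_eq_extremum split: if_splits)
qed

lemma flux_integrand_eq:
  fixes \<omega> :: "'a::real_vector \<Rightarrow> real"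
  shows "indicator D y *\<^sub>R ((q (x, y) * \<omega> (x - y)) *\<^sub>R (x - y)) = (indicator D y * q (x, y)) *\<^sub>R (\<omega> (x - y) *\<^sub>R (x - y))"
  by (simp add: mult.assoc)

lemma flux_recovery_linear:
  assumes "set_integrable lebesgue D (\<lambda>x'. (q1 (x, x') * \<omega> (x - x')) *\<^sub>R (x - x'))"
    and "set_integrable lebesgue D (\<lambda>x'. (q2 (x, x') * \<omega> (x - x')) *\<^sub>R (x - x'))"
  shows "flux_recovery D \<omega> (\<lambda>p. a * q1 p + b * q2 p) x
    = a *\<^sub>R flux_recovery D \<omega> q1 x + b *\<^sub>R flux_recovery D \<omega> q2 x"
proof -
  have "flux_recovery D \<omega> (\<lambda>p. a * q1 p + b * q2 p) x
      = (\<integral>x'\<in>D. a *\<^sub>R ((q1 (x, x') * \<omega> (x - x')) *\<^sub>R (x - x'))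
          + b *\<^sub>R ((q2 (x, x') * \<omega> (x - x')) *\<^sub>R (x - x')) \<partial>lebesgue)"
    unfolding flux_recovery_def by (simp add: algebra_simps)
  also have "\<dots> = (\<integral>x'\<in>D. a *\<^sub>R ((q1 (x, x') * \<omega> (x - x')) *\<^sub>R (x - x')) \<partial>lebesgue)
      + (\<integral>x'\<in>D. b *\<^sub>R ((q2 (x, x') * \<omega> (x - x')) *\<^sub>R (x - x')) \<partial>lebesgue)"
    by (intro set_integral_add(2) set_integrable_scaleR_right assms)
  also have "\<dots> = a *\<^sub>R flux_recovery D \<omega> q1 x + b *\<^sub>R flux_recovery D \<omega> q2 x"
    unfolding flux_recovery_def by (simp only: set_integral_scaleR_right)
  finally show ?thesis .
qed

text \<open>The normalisation is the paper's int |z|^2 \<omega>(z)^2 dz = 1/K_{2,n}, rewritten with K2_eq.\<close>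

locale normalized_radial_kernel =
  fixes \<omega> :: "'a::euclidean_space \<Rightarrow> real"
  assumes measurable_kernel[measurable]: "\<omega> \<in> borel_measurable lebesgue"
    and radial: "\<And>z z'. norm z = norm z' \<Longrightarrow> \<omega> z = \<omega> z'"
    and normalized: "(\<integral>\<^sup>+z. ennreal ((norm z)\<^sup>2 * (\<omega> z)\<^sup>2) \<partial>lebesgue) = ennreal (DIM('a))"
begin

lemma borel_measurable_kernel_diff[measurable]:
  "(\<lambda>y. \<omega> (x - y)) \<in> borel_measurable lebesgue"
  by (rule measurable_lebesgue_diff_compose[OF measurable_kernel])

lemma second_moment:
  assumes u: "norm u = 1"
  shows "(\<integral>\<^sup>+z. ennreal ((\<omega> z)\<^sup>2 * (z \<bullet> u)\<^sup>2) \<partial>lebesgue) = 1"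
proof -
  have nn_norm: "(\<integral>\<^sup>+z. ennreal ((\<omega> z)\<^sup>2 * (norm z)\<^sup>2) \<partial>lebesgue) = ennreal (DIM('a))"
    using normalized by (simp add: mult.commute)
  have int_norm: "integrable lebesgue (\<lambda>z. (\<omega> z)\<^sup>2 * (norm z)\<^sup>2)"
    by (rule integrableI_nn_integral_finite[OF _ _ nn_norm]) auto
  have int_norm_eq: "(\<integral>z. (\<omega> z)\<^sup>2 * (norm z)\<^sup>2 \<partial>lebesgue) = DIM('a)"
    using nn_norm nn_integral_eq_integral[OF int_norm] by (simp add: integral_nonneg_AE)
  have sq_radial: "(\<omega> z)\<^sup>2 = (\<omega> z')\<^sup>2" if "norm z = norm z'" for z z'
    using radial[OF that] by simp
  have "(\<integral>z. (\<omega> z)\<^sup>2 * (z \<bullet> u)\<^sup>2 \<partial>lebesgue) = (u \<bullet> u) * (\<integral>z. (\<omega> z)\<^sup>2 * (norm z)\<^sup>2 \<partial>lebesgue) / DIM('a)"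
    by (rule integral_radial_moment[OF _ sq_radial int_norm]) measurable
  then have moment: "(\<integral>z. (\<omega> z)\<^sup>2 * (z \<bullet> u)\<^sup>2 \<partial>lebesgue) = 1"
    using u unfolding int_norm_eq by (simp add: norm_eq_1)
  have "integrable lebesgue (\<lambda>z. (\<omega> z)\<^sup>2 * ((z \<bullet> u) * (z \<bullet> u)))"
    by (rule integrable_mult_inner_inner[OF _ int_norm]) measurable
  then have "integrable lebesgue (\<lambda>z. (\<omega> z)\<^sup>2 * (z \<bullet> u)\<^sup>2)"
    by (simp add: power2_eq_square)
  then have "(\<integral>\<^sup>+z. ennreal ((\<omega> z)\<^sup>2 * (z \<bullet> u)\<^sup>2) \<partial>lebesgue)
      = ennreal (\<integral>z. (\<omega> z)\<^sup>2 * (z \<bullet> u)\<^sup>2 \<partial>lebesgue)"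
    by (rule nn_integral_eq_integral) simp
  then show ?thesis using moment by simp
qed

lemma nn_integral_translated_kernel_norm:
  "(\<integral>\<^sup>+y. ennreal ((norm (\<omega> (x - y) *\<^sub>R (x - y)))\<^sup>2) \<partial>lebesgue) = ennreal (DIM('a))"
proof -
  have "(\<integral>\<^sup>+y. ennreal ((norm (\<omega> (x - y) *\<^sub>R (x - y)))\<^sup>2) \<partial>lebesgue)
      = (\<integral>\<^sup>+y. ennreal ((norm (x - y))\<^sup>2 * (\<omega> (x - y))\<^sup>2) \<partial>lebesgue)"
    by (simp add: power_mult_distrib mult.commute)
  also have "\<dots> = (\<integral>\<^sup>+z. ennreal ((norm z)\<^sup>2 * (\<omega> z)\<^sup>2) \<partial>lebesgue)"
    by (rule nn_integral_lebesgue_invariant[OF _ lborel_distr_diff]) measurable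
  finally show ?thesis using normalized by simp
qed

lemma nn_integral_translated_kernel_moment:
  assumes "norm u = 1"
  shows "(\<integral>\<^sup>+y. ennreal (((\<omega> (x - y) *\<^sub>R (x - y)) \<bullet> u)\<^sup>2) \<partial>lebesgue) = 1"
proof -
  have "(\<integral>\<^sup>+y. ennreal (((\<omega> (x - y) *\<^sub>R (x - y)) \<bullet> u)\<^sup>2) \<partial>lebesgue)
      = (\<integral>\<^sup>+y. ennreal ((\<omega> (x - y))\<^sup>2 * ((x - y) \<bullet> u)\<^sup>2) \<partial>lebesgue)"
    by (simp add: power_mult_distrib)
  also have "\<dots> = (\<integral>\<^sup>+z. ennreal ((\<omega> z)\<^sup>2 * (z \<bullet> u)\<^sup>2) \<partial>lebesgue)"
    by (rule nn_integral_lebesgue_invariant[OF _ lborel_distr_diff]) measurable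
  finally show ?thesis using second_moment[OF assms] by simp
qed

lemma set_integrable_flux_integrand:
  assumes [measurable]: "D \<in> sets lebesgue" "(\<lambda>y. q (x, y)) \<in> borel_measurable lebesgue"
    and finite: "(\<integral>\<^sup>+y. ennreal ((q (x, y))\<^sup>2) * indicator D y \<partial>lebesgue) < \<infinity>"
  shows "set_integrable lebesgue D (\<lambda>y. (q (x, y) * \<omega> (x - y)) *\<^sub>R (x - y))"
proof -
  have "(\<integral>\<^sup>+y. ennreal ((indicator D y * q (x, y))\<^sup>2) \<partial>lebesgue) < \<infinity>"
    using finite by (simp only: nn_integral_indicator_mult_square)
  moreover have "(\<integral>\<^sup>+y. ennreal ((norm (\<omega> (x - y) *\<^sub>R (x - y)))\<^sup>2) \<partial>lebesgue) < \<infinity>"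
    unfolding nn_integral_translated_kernel_norm by simp
  ultimately have "integrable lebesgue (\<lambda>y. (indicator D y * q (x, y)) *\<^sub>R (\<omega> (x - y) *\<^sub>R (x - y)))"
    by (intro integrable_scaleR_of_square_integrable) measurable
  then show ?thesis
    unfolding set_integrable_def flux_integrand_eq .
qed

lemma norm_flux_recovery_square_le:
  assumes [measurable]: "D \<in> sets lebesgue" "(\<lambda>y. q (x, y)) \<in> borel_measurable lebesgue"
  shows "(ennreal (norm (flux_recovery D \<omega> q x)))\<^sup>2 \<le> (\<integral>\<^sup>+y. ennreal ((q (x, y))\<^sup>2) * indicator D y \<partial>lebesgue)"
proof (cases "(\<integral>\<^sup>+y. ennreal ((q (x, y))\<^sup>2) * indicator D y \<partial>lebesgue) < \<infinity>")
  case True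
  have "flux_recovery D \<omega> q x = (\<integral>y. (indicator D y * q (x, y)) *\<^sub>R (\<omega> (x - y) *\<^sub>R (x - y)) \<partial>lebesgue)"
    unfolding flux_recovery_def set_lebesgue_integral_def flux_integrand_eq ..
  moreover have "(ennreal (norm (\<integral>y. (indicator D y * q (x, y)) *\<^sub>R (\<omega> (x - y) *\<^sub>R (x - y)) \<partial>lebesgue)))\<^sup>2
      \<le> (\<integral>\<^sup>+y. ennreal ((indicator D y * q (x, y))\<^sup>2) \<partial>lebesgue) * 1"
  proof (rule norm_integral_scaleR_square_le)
    show "integrable lebesgue (\<lambda>y. (indicator D y * q (x, y)) *\<^sub>R (\<omega> (x - y) *\<^sub>R (x - y)))"
      using set_integrable_flux_integrand[OF assms True] unfolding set_integrable_def flux_integrand_eq .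
    show "(\<integral>\<^sup>+y. ennreal (((\<omega> (x - y) *\<^sub>R (x - y)) \<bullet> u)\<^sup>2) \<partial>lebesgue) \<le> 1" if "norm u = 1" for u
      using that by (rule order_eq_refl[OF nn_integral_translated_kernel_moment])
  qed measurable
  ultimately show ?thesis by (simp add: nn_integral_indicator_mult_square)
qed (simp add: not_less top_unique)

lemma norm_flux_recovery_le_inner_L2:
  assumes "D \<in> sets lebesgue" "(\<lambda>y. q (x, y)) \<in> borel_measurable lebesgue"
  shows "ennreal (norm (flux_recovery D \<omega> q x)) \<le> inner_L2 D q x"
proof (cases "(\<integral>\<^sup>+y. ennreal ((q (x, y))\<^sup>2) * indicator D y \<partial>lebesgue) = \<infinity>")
  case False
  then obtain r where r: "(\<integral>\<^sup>+y. ennreal ((q (x, y))\<^sup>2) * indicator D y \<partial>lebesgue) = ennreal r" "r \<ge> 0"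
    by (cases "(\<integral>\<^sup>+y. ennreal ((q (x, y))\<^sup>2) * indicator D y \<partial>lebesgue)") auto
  then have "ennreal ((norm (flux_recovery D \<omega> q x))\<^sup>2) \<le> ennreal r"
    using norm_flux_recovery_square_le[OF assms] by (simp add: ennreal_power)
  then have "(norm (flux_recovery D \<omega> q x))\<^sup>2 \<le> r"
    using r(2) by (simp add: ennreal_le_iff)
  then have "norm (flux_recovery D \<omega> q x) \<le> sqrt r"
    by (simp add: real_le_rsqrt)
  then show ?thesis
    using r by (simp add: inner_L2_def ennreal_leI)
qed (simp add: inner_L2_def)

lemma AE_set_integrable_flux_integrand:
  assumes D: "D \<in> sets borel" and q: "q \<in> L12 D"
  shows "AE x in lebesgue. x \<in> D \<longrightarrow>
    set_integrable lebesgue D (\<lambda>y. (q (x, y) * \<omega> (x - y)) *\<^sub>R (x - y))"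
  using AE_inner_L2_finite[OF D q]
proof eventually_elim
  case (elim x)
  have "q \<in> borel_measurable borel" using q by (simp add: L12_def)
  then have "(\<lambda>y. q (x, y)) \<in> borel_measurable lebesgue"
    by (rule borel_measurable_lebesgue_slice)
  with elim D show ?case
    by (auto intro: set_integrable_flux_integrand)
qed

lemma nn_integral_norm_flux_recovery_le_mixed_norm:
  assumes D: "D \<in> sets borel" and q: "q \<in> borel_measurable borel"
  shows "(\<integral>\<^sup>+x. ennreal (norm (indicator D x *\<^sub>R flux_recovery D \<omega> q x)) \<partial>lebesgue) \<le> mixed_norm D q"
  unfolding mixed_norm_def
proof (rule nn_integral_mono)
  fix x
  have "(\<lambda>y. q (x, y)) \<in> borel_measurable lebesgue"
    using q by (rule borel_measurable_lebesgue_slice)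
  with D have "ennreal (norm (flux_recovery D \<omega> q x)) \<le> inner_L2 D q x"
    by (intro norm_flux_recovery_le_inner_L2) auto
  then show "ennreal (norm (indicator D x *\<^sub>R flux_recovery D \<omega> q x)) \<le> inner_L2 D q x * indicator D x"
    by (simp split: split_indicator)
qed

lemma set_integrable_flux_recovery:
  assumes D: "D \<in> sets borel" and q: "q \<in> L12 D"
  shows "set_integrable lebesgue D (flux_recovery D \<omega> q)"
proof -
  have q_meas: "q \<in> borel_measurable borel" and finite: "mixed_norm D q < \<infinity>"
    using q by (auto simp: L12_def)
  have "(\<integral>\<^sup>+x. ennreal (norm (indicator D x *\<^sub>R flux_recovery D \<omega> q x)) \<partial>lebesgue) < \<infinity>"
    using nn_integral_norm_flux_recovery_le_mixed_norm[OF D q_meas] finite by (rule le_less_trans)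
  moreover have [measurable]: "flux_recovery D \<omega> q \<in> borel_measurable lebesgue" "D \<in> sets lebesgue"
    using borel_measurable_flux_recovery[OF measurable_kernel D q_meas] D by auto
  ultimately show ?thesis
    unfolding set_integrable_def by (intro integrableI_bounded) measurable
qed

lemma set_integral_norm_flux_recovery_le:
  assumes D: "D \<in> sets borel" and q: "q \<in> L12 D"
  shows "ennreal (\<integral>x\<in>D. norm (flux_recovery D \<omega> q x) \<partial>lebesgue) \<le> mixed_norm D q"
proof -
  have q_meas: "q \<in> borel_measurable borel" using q by (simp add: L12_def)
  have int: "integrable lebesgue (\<lambda>x. indicator D x *\<^sub>R flux_recovery D \<omega> q x)"
    using set_integrable_flux_recovery[OF D q] unfolding set_integrable_def .
  have "ennreal (\<integral>x\<in>D. norm (flux_recovery D \<omega> q x) \<partial>lebesgue)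
      = ennreal (\<integral>x. norm (indicator D x *\<^sub>R flux_recovery D \<omega> q x) \<partial>lebesgue)"
    unfolding set_lebesgue_integral_def by (simp split: split_indicator)
  also have "\<dots> = (\<integral>\<^sup>+x. ennreal (norm (indicator D x *\<^sub>R flux_recovery D \<omega> q x)) \<partial>lebesgue)"
    by (rule nn_integral_eq_integral[OF integrable_norm[OF int], symmetric]) simp
  also have "\<dots> \<le> mixed_norm D q"
    by (rule nn_integral_norm_flux_recovery_le_mixed_norm[OF D q_meas])
  finally show ?thesis .
qed

end

theorem proposition4p10:
  fixes \<Omega> :: "'a::euclidean_space set" and \<delta> :: real
    and \<omega> :: "'a \<Rightarrow> real" and e :: 'a
  assumes dim: "DIM('a) \<ge> 2"
    and \<Omega>_open: "open \<Omega>" and \<Omega>_bdd: "bounded \<Omega>"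
    and \<delta>_pos: "\<delta> > 0"
    and e_unit: "norm e = 1"
    and \<omega>_nonneg: "\<And>z. \<omega> z \<ge> 0"
    and \<omega>_meas: "\<omega> \<in> borel_measurable lebesgue"
    and \<omega>_radial: "\<And>z z'. norm z = norm z' \<Longrightarrow> \<omega> z = \<omega> z'"
    and \<omega>_supp: "\<And>z. norm z \<ge> \<delta> \<Longrightarrow> \<omega> z = 0"
    and \<omega>_norm: "(\<integral>\<^sup>+z. ennreal ((norm z)\<^sup>2 * (\<omega> z)\<^sup>2) \<partial>lebesgue) = ennreal (1 / K2 e)"
  shows
    "(\<forall>q\<in>L12 (nbhd \<Omega> \<delta>).
        (AE x in lebesgue. x \<in> nbhd \<Omega> \<delta> \<longrightarrow>
           set_integrable lebesgue (nbhd \<Omega> \<delta>) (\<lambda>x'. (q (x, x') * \<omega> (x - x')) *\<^sub>R (x - x'))) \<and>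
        set_integrable lebesgue (nbhd \<Omega> \<delta>) (flux_recovery (nbhd \<Omega> \<delta>) \<omega> q) \<and>
        ennreal (\<integral>x\<in>nbhd \<Omega> \<delta>. norm (flux_recovery (nbhd \<Omega> \<delta>) \<omega> q x) \<partial>lebesgue)
          \<le> mixed_norm (nbhd \<Omega> \<delta>) q)
     \<and> (\<forall>q1\<in>L12 (nbhd \<Omega> \<delta>). \<forall>q2\<in>L12 (nbhd \<Omega> \<delta>). \<forall>a b::real.
          AE x in lebesgue. x \<in> nbhd \<Omega> \<delta> \<longrightarrow>
            flux_recovery (nbhd \<Omega> \<delta>) \<omega> (\<lambda>p. a * q1 p + b * q2 p) x
              = a *\<^sub>R flux_recovery (nbhd \<Omega> \<delta>) \<omega> q1 x + b *\<^sub>R flux_recovery (nbhd \<Omega> \<delta>) \<omega> q2 x)"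
proof -
  interpret normalized_radial_kernel \<omega>
    by unfold_locales (fact \<omega>_meas, fact \<omega>_radial, use \<omega>_norm in \<open>simp add: K2_eq[OF e_unit]\<close>)
  have D: "nbhd \<Omega> \<delta> \<in> sets borel"
    unfolding nbhd_def by (intro borel_open open_UN ballI open_ball)
  show ?thesis
  proof (intro conjI ballI allI)
    fix q assume q: "q \<in> L12 (nbhd \<Omega> \<delta>)"
    show "AE x in lebesgue. x \<in> nbhd \<Omega> \<delta> \<longrightarrow>
        set_integrable lebesgue (nbhd \<Omega> \<delta>) (\<lambda>x'. (q (x, x') * \<omega> (x - x')) *\<^sub>R (x - x'))"
      by (rule AE_set_integrable_flux_integrand[OF D q])
    show "set_integrable lebesgue (nbhd \<Omega> \<delta>) (flux_recovery (nbhd \<Omega> \<delta>) \<omega> q)"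
      by (rule set_integrable_flux_recovery[OF D q])
    show "ennreal (\<integral>x\<in>nbhd \<Omega> \<delta>. norm (flux_recovery (nbhd \<Omega> \<delta>) \<omega> q x) \<partial>lebesgue)
        \<le> mixed_norm (nbhd \<Omega> \<delta>) q"
      by (rule set_integral_norm_flux_recovery_le[OF D q])
  next
    fix q1 q2 and a b :: real
    assume "q1 \<in> L12 (nbhd \<Omega> \<delta>)" "q2 \<in> L12 (nbhd \<Omega> \<delta>)"
    from this[THEN AE_set_integrable_flux_integrand[OF D]]
    show "AE x in lebesgue. x \<in> nbhd \<Omega> \<delta> \<longrightarrow>
        flux_recovery (nbhd \<Omega> \<delta>) \<omega> (\<lambda>p. a * q1 p + b * q2 p) x
          = a *\<^sub>R flux_recovery (nbhd \<Omega> \<delta>) \<omega> q1 x + b *\<^sub>R flux_recovery (nbhd \<Omega> \<delta>) \<omega> q2 x"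
      by eventually_elim (auto intro: flux_recovery_linear)
  qed
qed

end
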